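(* Let $F\colon Q^S\to Q^B$ be one of the weighted foldings in the context, with $S$ the integer exchange matrix of $Q^S$ and $B=(b_{[i][j]})$ the exchange matrix of $Q^B$. Then there is an ordering of $Q^S_0$ such that, writing $S$ as a block matrix $(S_{[i][j]})$ whose $([i],[j])$ block consists of the entries indexed by $(k,l)$ with $F(k)=[i]$, $F(l)=[j]$ (each block $n\times n$), one has $S_{[i][j]}=\rho(b'_{[i][j]})$ for some $b'_{[i][j]}\in\Lambda_{2n+1}$ with $\sigma_{2n+1}(b'_{[i][j]})=b_{[i][j]}$.
   Context: Foldings: (I) $n\ge2$, $Q^S=Q^{A_{2n}}$ on vertices $0..2n-1$ with arrows between $i,i+1$, bipartite (even vertices all sources or all sinks), vertex weights $U_i(\cos\frac{\pi}{2n+1})$, onto $Q^B=Q^{I_2(2n+1)}$ (vertices $[0],[1]$, one arrow of weight $2\cos\frac{\pi}{2n+1}$ oriented like arrows from even to odd vertices), $F(i)=[i\bmod2]$. (H) $n=2$, $m\in\{3,4\}$, $Q^S$ of type $D_6/E_8$ on vertices $1..m,\phi_1..\phi_m$, edges $i-(i+1)$, $\phi_i-\phi_{i+1}$ ($i\le m-2$), $(m-1)-\phi_m$, $\phi_{m-1}-m$, $\phi_{m-1}-\phi_m$, edges between consecutive columns $\{i,\phi_i\},\{i+1,\phi_{i+1}\}$ oriented alike, weights $1$ on $i$, $2\cos\frac\pi5$ on $\phi_i$, onto the path $Q^{H_m}$ ($i,\phi_i\mapsto[i]$, arrow weights $1$ except $2\cos\frac\pi5$ on $[m-1]-[m]$,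 orientations as in $Q^S$). Exchange matrices: $b_{ij}$ = weight of arrow $i\to j$, minus weight of $j\to i$, $0$ if none. $\Lambda_{2n+1}$ is the commutative ring generated over $\mathbb Z$ by $\psi_1,\dots,\psi_{n-1}$ with $\psi_k\psi_l=\sum_{j=0}^l\psi_{k-l+2j}$ ($k\ge l$), where $\psi_0=1$, $\psi_{2n}=0$, $\psi_k=\psi_{2n-1-k}$ ($k<2n$); $\{\psi_0,\dots,\psi_{n-1}\}$ is a $\mathbb Z$-basis. $\rho\colon\Lambda_{2n+1}\to\mathbb Z^{n\times n}$ is the regular representation in this basis: $\rho(r)v(s)=v(rs)$, where $v(s)\in\mathbb Z^n$ is the coordinate vector of $s$. $\sigma_{2n+1}\colon\Lambda_{2n+1}\to\mathbb Z[2\cos\frac{\pi}{2n+1}]$ is the ring homomorphism with $\psi_k\mapsto U_k(\cos\frac{\pi}{2n+1})$. *)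

theory Defs
  imports Complex_Main
begin

text \<open>A weighted quiver is given by its set of arrows (pairs (i,j) meaning an arrow i -> j)
  together with a weight for each arrow.\<close>

definition exch_matrix :: "('v \<times> 'v) set \<Rightarrow> ('v \<times> 'v \<Rightarrow> 'a::ab_group_add) \<Rightarrow> 'v \<Rightarrow> 'v \<Rightarrow> 'a" where
  "exch_matrix arr w i j =
     (if (i, j) \<in> arr then w (i, j) else 0) - (if (j, i) \<in> arr then w (j, i) else 0)"

fun chebU :: "nat \<Rightarrow> real \<Rightarrow> real" where
  "chebU 0 x = 1"
| "chebU (Suc 0) x = 2 * x"
| "chebU (Suc (Suc k)) x = 2 * x * chebU (Suc k) x - chebU k x"

text \<open>An element r of Lambda_{2n+1} is represented by its coordinate vector
  r :: nat => int (only the coordinates 0..n-1 are used): r = sum_{k<n} r k * psi_k.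
  For 0 <= m <= 2n-2, the basis index of psi_m after the reductions
  psi_k = psi_{2n-1-k} (k < 2n).\<close>

definition psi_red :: "nat \<Rightarrow> nat \<Rightarrow> nat" where
  "psi_red n m = (if m < n then m else 2 * n - 1 - m)"

text \<open>Structure constants: coefficient of psi_a in psi_k * psi_l (k, l < n), using
  psi_k psi_l = sum_{j=0}^{l} psi_{k-l+2j} for k >= l (and commutativity).\<close>

definition lam_coeff :: "nat \<Rightarrow> nat \<Rightarrow> nat \<Rightarrow> nat \<Rightarrow> int" where
  "lam_coeff n k l a =
     (let k' = max k l; l' = min k l in
      int (card {j \<in> {0..l'}. psi_red n (k' - l' + 2 * j) = a}))"

text \<open>Regular representation rho: rho(r) v(s) = v(r s). Column b of rho(r) is v(r psi_b),
  so the (a,b) entry is the psi_a coordinate of r * psi_b.\<close>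

definition lam_rho :: "nat \<Rightarrow> (nat \<Rightarrow> int) \<Rightarrow> nat \<Rightarrow> nat \<Rightarrow> int" where
  "lam_rho n r a b = (\<Sum>k<n. r k * lam_coeff n k b a)"

definition lam_sigma :: "nat \<Rightarrow> (nat \<Rightarrow> int) \<Rightarrow> real" where
  "lam_sigma n r = (\<Sum>k<n. of_int (r k) * chebU k (cos (pi / real (2 * n + 1))))"

text \<open>There is an ordering of the vertices of Q^S, i.e. for each vertex c of Q^B an
  enumeration e c 0, ..., e c (n-1) of the fibre F^{-1}(c), such that every block
  S_{[c][d]} equals rho(b') for some b' in Lambda_{2n+1} with sigma(b') = b_{[c][d]}.\<close>

definition block_form ::
  "nat \<Rightarrow> 'v set \<Rightarrow> 'c set \<Rightarrow> ('v \<Rightarrow> 'c) \<Rightarrow> ('v \<Rightarrow> 'v \<Rightarrow> int) \<Rightarrow> ('c \<Rightarrow> 'c \<Rightarrow> real) \<Rightarrow> bool" where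
  "block_form n V C F S B \<longleftrightarrow>
     (\<exists>e :: 'c \<Rightarrow> nat \<Rightarrow> 'v.
        (\<forall>c\<in>C. bij_betw (e c) {..<n} {v \<in> V. F v = c}) \<and>
        (\<forall>c\<in>C. \<forall>d\<in>C. \<exists>b' :: nat \<Rightarrow> int.
            lam_sigma n b' = B c d \<and>
            (\<forall>a<n. \<forall>b<n. S (e c a) (e d b) = lam_rho n b' a b)))"

section \<open>Folding (I): A_{2n} onto I_2(2n+1)\<close>

text \<open>Vertices 0..2n-1, arrows between i and i+1; if evsrc then all even vertices are
  sources (arrows even -> odd), otherwise all even vertices are sinks.\<close>

definition arrows_I :: "nat \<Rightarrow> bool \<Rightarrow> (nat \<times> nat) set" where
  "arrows_I n evsrc = {(i, j). i < 2 * n \<and> j < 2 * n \<and> (j = i + 1 \<or> i = j + 1) \<and>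
                              (even i \<longleftrightarrow> evsrc)}"

definition S_I :: "nat \<Rightarrow> bool \<Rightarrow> nat \<Rightarrow> nat \<Rightarrow> int" where
  "S_I n evsrc = exch_matrix (arrows_I n evsrc) (\<lambda>_. 1)"

definition arrows_BI :: "bool \<Rightarrow> (nat \<times> nat) set" where
  "arrows_BI evsrc = (if evsrc then {(0, 1)} else {(1, 0)})"

definition B_I :: "nat \<Rightarrow> bool \<Rightarrow> nat \<Rightarrow> nat \<Rightarrow> real" where
  "B_I n evsrc = exch_matrix (arrows_BI evsrc) (\<lambda>_. 2 * cos (pi / real (2 * n + 1)))"

definition F_I :: "nat \<Rightarrow> nat" where
  "F_I i = i mod 2"

section \<open>Folding (H): D_6 / E_8 onto H_3 / H_4\<close>

text \<open>Vertex (i, False) stands for i, vertex (i, True) for phi_i, 1 <= i <= m.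
  The column of a vertex is its first component.\<close>

definition V_H :: "nat \<Rightarrow> (nat \<times> bool) set" where
  "V_H m = {1..m} \<times> UNIV"

text \<open>Underlying edges, each written (u, v) with u in column i and v in column i+1.\<close>

definition edges_H :: "nat \<Rightarrow> ((nat \<times> bool) \<times> (nat \<times> bool)) set" where
  "edges_H m =
     {((i, False), (i + 1, False)) | i. 1 \<le> i \<and> i \<le> m - 2} \<union>
     {((i, True), (i + 1, True)) | i. 1 \<le> i \<and> i \<le> m - 2} \<union>
     {((m - 1, False), (m, True)), ((m - 1, True), (m, False)), ((m - 1, True), (m, True))}"

definition arrows_H :: "nat \<Rightarrow> (nat \<Rightarrow> bool) \<Rightarrow> ((nat \<times> bool) \<times> (nat \<times> bool)) set" where
  "arrows_H m dir = {(u, v). (u, v) \<in> edges_H m \<and> dir (fst u)} \<union>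
                    {(v, u). (u, v) \<in> edges_H m \<and> \<not> dir (fst u)}"

definition S_H :: "nat \<Rightarrow> (nat \<Rightarrow> bool) \<Rightarrow> (nat \<times> bool) \<Rightarrow> (nat \<times> bool) \<Rightarrow> int" where
  "S_H m dir = exch_matrix (arrows_H m dir) (\<lambda>_. 1)"

definition arrows_BH :: "nat \<Rightarrow> (nat \<Rightarrow> bool) \<Rightarrow> (nat \<times> nat) set" where
  "arrows_BH m dir = {(i, i + 1) | i. 1 \<le> i \<and> i < m \<and> dir i} \<union>
                     {(i + 1, i) | i. 1 \<le> i \<and> i < m \<and> \<not> dir i}"

definition B_H :: "nat \<Rightarrow> (nat \<Rightarrow> bool) \<Rightarrow> nat \<Rightarrow> nat \<Rightarrow> real" where
  "B_H m dir = exch_matrix (arrows_BH m dir)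
                 (\<lambda>(i, j). if {i, j} = {m - 1, m} then 2 * cos (pi / 5) else 1)"

definition F_H :: "nat \<times> bool \<Rightarrow> nat" where
  "F_H v = fst v"

end

theory Submission
  imports Defs
begin

(* Every block S_[c][d] is s * rho(psi_k) with k in {0, 1} and s in {-1, 0, 1} the sign of
   b_[c][d]; since sigma(psi_k) = U_k(cos(pi/(2n+1))) is exactly the weight of the arrow [c] - [d],
   this is the required block form.
   For (I), give the vertex v of A_2n, of weight U_v = sigma(psi_v), the index of psi_v in the basis,
   using psi_v = psi_(2n-1-v): this folds the path in the middle. As psi_1 psi_b = psi_(b-1) + psi_(b+1)
   with psi_n = psi_(n-1), rho(psi_1) is the adjacency matrix of the path 0 - ... - (n-1) with a loop
   at n-1, which is exactly the folded path, the loop coming from the middle edge (n-1) - n.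
   For (H), order each column as i, phi_i: the edges between columns i and i+1 form the identity
   pattern rho(psi_0), except between m-1 and m where they form rho(psi_1) = [[0,1],[1,1]]. *)

lemma exch_matrix_symmetric_weight:
  fixes w :: "'v \<times> 'v \<Rightarrow> 'a::ring_1"
  assumes "w (i, j) = x" and "w (j, i) = x"
  shows "exch_matrix arr w i j = of_int (exch_matrix arr (\<lambda>_. 1) i j) * x"
  using assms by (simp add: exch_matrix_def algebra_simps)

lemma card_level_set_upto_0:
  "card {j \<in> {0..0::nat}. f j = a} = of_bool (f 0 = a)"
proof -
  have "{j \<in> {0..0::nat}. f j = a} = (if f 0 = a then {0} else {})"
    by auto
  then show ?thesis by simp
qed

lemma card_level_set_upto_1:
  "card {j \<in> {0..1::nat}. f j = a} = of_bool (f 0 = a) + of_bool (f 1 = a)"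
proof -
  have "{j \<in> {0..1::nat}. f j = a} = {j \<in> {0}. f j = a} \<union> {j \<in> {1}. f j = a}"
    by (auto simp: atLeastAtMost_iff le_Suc_eq)
  also have "card \<dots> = card {j \<in> {0::nat}. f j = a} + card {j \<in> {1::nat}. f j = a}"
    by (rule card_Un_disjoint) auto
  finally show ?thesis by (simp add: Collect_conj_eq)
qed

lemma lam_coeff_0:
  assumes "a < n" and "b < n"
  shows "lam_coeff n 0 b a = of_bool (a = b)"
proof -
  have "lam_coeff n 0 b a = of_bool (psi_red n b = a)"
    unfolding lam_coeff_def Let_def max_0L min_0L diff_zero card_level_set_upto_0 by simp
  then show ?thesis using assms by (auto simp: psi_red_def)
qed

lemma lam_coeff_1:
  assumes "n \<ge> 2" and "a < n" and "b < n"
  shows "lam_coeff n 1 b a = of_bool (a = b + 1 \<or> b = a + 1 \<or> a = n - 1 \<and> b = n - 1)"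
proof (cases "b = 0")
  case True
  then have "max 1 b = 1" and "min 1 b = 0" by simp_all
  then have "lam_coeff n 1 b a = of_bool (psi_red n 1 = a)"
    unfolding lam_coeff_def Let_def by (simp only: diff_zero card_level_set_upto_0) simp
  then show ?thesis using assms True by (auto simp: psi_red_def)
next
  case False
  then have "max 1 b = b" and "min 1 b = 1" and "b - 1 + 2 * 1 = b + 1" by simp_all
  then have "lam_coeff n 1 b a =
      of_bool (psi_red n (b - 1) = a) + of_bool (psi_red n (b + 1) = a)"
    unfolding lam_coeff_def Let_def by (simp only: card_level_set_upto_1) simp
  moreover have "psi_red n (b - 1) = b - 1"
    and "psi_red n (b + 1) = (if b + 1 < n then b + 1 else n - 1)"
    using assms by (auto simp: psi_red_def)
  ultimately show ?thesis using assms False by (cases "b + 1 < n"; cases "a = b - 1") auto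
qed

lemma lam_coeff_dim2:
  assumes "a < 2" and "b < 2"
  shows "lam_coeff 2 (of_bool P) b a = of_bool (if P then a = 1 \<or> b = 1 else a = b)"
  using assms lam_coeff_0[of a 2 b] lam_coeff_1[of 2 a b] by auto

lemma lam_rho_monomial:
  assumes "k < n"
  shows "lam_rho n (\<lambda>i. if i = k then s else 0) a b = s * lam_coeff n k b a"
  using assms unfolding lam_rho_def by (simp add: if_distrib[of "\<lambda>x. x * _"] cong: if_cong)

lemma lam_sigma_monomial:
  assumes "k < n"
  shows "lam_sigma n (\<lambda>i. if i = k then s else 0) =
    of_int s * chebU k (cos (pi / real (2 * n + 1)))"
  using assms unfolding lam_sigma_def by (simp add: if_distrib[of "\<lambda>x. of_int x * _"] cong: if_cong)

lemma block_form_monomialI: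
  fixes e :: "'c \<Rightarrow> nat \<Rightarrow> 'v" and s :: "'c \<Rightarrow> 'c \<Rightarrow> int" and k :: "'c \<Rightarrow> 'c \<Rightarrow> nat"
  assumes "\<And>c. c \<in> C \<Longrightarrow> bij_betw (e c) {..<n} {v \<in> V. F v = c}"
    and "\<And>c d. c \<in> C \<Longrightarrow> d \<in> C \<Longrightarrow> k c d < n"
    and "\<And>c d a b. c \<in> C \<Longrightarrow> d \<in> C \<Longrightarrow> a < n \<Longrightarrow> b < n \<Longrightarrow>
           S (e c a) (e d b) = s c d * lam_coeff n (k c d) b a"
    and "\<And>c d. c \<in> C \<Longrightarrow> d \<in> C \<Longrightarrow>
           B c d = of_int (s c d) * chebU (k c d) (cos (pi / real (2 * n + 1)))"
  shows "block_form n V C F S B"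
  unfolding block_form_def
proof (intro exI[of _ e] conjI ballI)
  fix c d assume "c \<in> C" and "d \<in> C"
  then show "\<exists>b'. lam_sigma n b' = B c d \<and>
      (\<forall>a<n. \<forall>b<n. S (e c a) (e d b) = lam_rho n b' a b)"
    using assms by (intro exI[of _ "\<lambda>i. if i = k c d then s c d else 0"])
      (simp add: lam_sigma_monomial lam_rho_monomial)
qed (use assms in blast)

lemma psi_red_cases:
  assumes "u < 2 * n"
  obtains "u < n" and "psi_red n u = u" | "\<not> u < n" and "psi_red n u + u + 1 = 2 * n"
  using assms unfolding psi_red_def by (cases "u < n") auto

lemma even_mirror_iff:
  fixes a n :: nat
  assumes "a < 2 * n"
  shows "even (2 * n - 1 - a) \<longleftrightarrow> odd a"
proof -
  have "(2 * n - 1 - a) + a + 1 = 2 * n" using assms by simp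
  then have "even ((2 * n - 1 - a) + a + 1)" by (metis dvd_triv_left)
  then show ?thesis by simp
qed

lemma mod_2_eq_iff_even:
  fixes c v :: nat
  assumes "c \<in> {0, 1}"
  shows "v mod 2 = c \<longleftrightarrow> (even v \<longleftrightarrow> c = 0)"
  using assms by (auto simp: mod2_eq_if)

lemma adjacent_iff_psi_red:
  assumes "v < 2 * n" and "w < 2 * n" and "odd (v + w)"
  shows "(w = v + 1 \<or> v = w + 1) \<longleftrightarrow>
    psi_red n v = psi_red n w + 1 \<or> psi_red n w = psi_red n v + 1 \<or>
    psi_red n v = n - 1 \<and> psi_red n w = n - 1"
proof -
  have "v + w \<noteq> 2 * j" for j using \<open>odd (v + w)\<close> by (metis dvd_triv_left)
  \<comment> \<open>parity excludes v = w, v + w = 2n and v + w = 2n - 2, the only spurious solutions\<close>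
  from this[of v] this[of n] this[of "n - 1"] show ?thesis
    by (cases rule: psi_red_cases[OF assms(1)]; cases rule: psi_red_cases[OF assms(2)]) auto
qed

lemma S_I_eq:
  assumes "v < 2 * n" and "w < 2 * n"
  shows "S_I n evsrc v w =
    (if w = v + 1 \<or> v = w + 1 then (if even v = evsrc then 1 else -1) else 0)"
  using assms by (auto simp: S_I_def exch_matrix_def arrows_I_def)

lemma exch_matrix_arrows_BI:
  assumes "c \<in> {0, 1}" and "d \<in> {0, 1}"
  shows "exch_matrix (arrows_BI evsrc) (\<lambda>_. 1) c d =
    (if c = d then 0 else if (c = 0) = evsrc then 1 else -1)"
  using assms by (auto simp: exch_matrix_def arrows_BI_def)

definition enum_I :: "nat \<Rightarrow> nat \<Rightarrow> nat \<Rightarrow> nat" where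
  "enum_I n c a = (if a mod 2 = c then a else 2 * n - 1 - a)"

lemma enum_I_in_fibre:
  assumes "c \<in> {0, 1}" and "a < n"
  shows "enum_I n c a < 2 * n" and "enum_I n c a mod 2 = c"
  using assms even_mirror_iff[of a n] by (auto simp: enum_I_def mod_2_eq_iff_even)

lemma psi_red_enum_I:
  assumes "a < n"
  shows "psi_red n (enum_I n c a) = a"
  using assms unfolding enum_I_def psi_red_def by auto

lemma bij_betw_enum_I:
  assumes "c \<in> {0, 1}"
  shows "bij_betw (enum_I n c) {..<n} {v \<in> {0..<2 * n}. F_I v = c}"
proof (rule bij_betw_byWitness[where f' = "psi_red n"])
  show "\<forall>a \<in> {..<n}. psi_red n (enum_I n c a) = a"
    by (simp add: psi_red_enum_I)
  show "\<forall>v \<in> {v \<in> {0..<2 * n}. F_I v = c}. enum_I n c (psi_red n v) = v"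
  proof
    fix v assume v: "v \<in> {v \<in> {0..<2 * n}. F_I v = c}"
    then have "v < 2 * n" and "v mod 2 = c" by (simp_all add: F_I_def)
    then show "enum_I n c (psi_red n v) = v"
    proof (cases rule: psi_red_cases)
      case 2
      then have "psi_red n v = 2 * n - 1 - v" by simp
      then show ?thesis
        using assms \<open>v < 2 * n\<close> \<open>v mod 2 = c\<close> even_mirror_iff[of v n]
        by (auto simp: enum_I_def mod_2_eq_iff_even)
    qed (simp add: enum_I_def)
  qed
  show "enum_I n c ` {..<n} \<subseteq> {v \<in> {0..<2 * n}. F_I v = c}"
    using enum_I_in_fibre[OF assms] by (auto simp: F_I_def)
  show "psi_red n ` {v \<in> {0..<2 * n}. F_I v = c} \<subseteq> {..<n}"
    unfolding psi_red_def by auto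
qed

lemma S_I_enum_I:
  assumes "n \<ge> 2" and c: "c \<in> {0, 1}" and d: "d \<in> {0, 1}" and "a < n" and "b < n"
  shows "S_I n evsrc (enum_I n c a) (enum_I n d b) =
    exch_matrix (arrows_BI evsrc) (\<lambda>_. 1) c d * lam_coeff n 1 b a"
proof -
  define v w where "v = enum_I n c a" and "w = enum_I n d b"
  have v: "v < 2 * n" "even v \<longleftrightarrow> c = 0" "psi_red n v = a"
    using enum_I_in_fibre[OF c \<open>a < n\<close>] psi_red_enum_I[OF \<open>a < n\<close>] c
    by (simp_all add: v_def mod_2_eq_iff_even)
  have w: "w < 2 * n" "even w \<longleftrightarrow> d = 0" "psi_red n w = b"
    using enum_I_in_fibre[OF d \<open>b < n\<close>] psi_red_enum_I[OF \<open>b < n\<close>] d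
    by (simp_all add: w_def mod_2_eq_iff_even)
  have "S_I n evsrc v w = exch_matrix (arrows_BI evsrc) (\<lambda>_. 1) c d * lam_coeff n 1 b a"
  proof (cases "c = d")
    case True
    then have "\<not> (w = v + 1 \<or> v = w + 1)" using v(2) w(2) by auto
    then show ?thesis using True c d v(1) w(1) by (simp add: S_I_eq exch_matrix_arrows_BI)
  next
    case False
    then have "odd (v + w)" using v(2) w(2) c d by auto
    then have "lam_coeff n 1 b a = of_bool (w = v + 1 \<or> v = w + 1)"
      using adjacent_iff_psi_red[OF v(1) w(1)] v(3) w(3)
        lam_coeff_1[OF \<open>n \<ge> 2\<close> \<open>a < n\<close> \<open>b < n\<close>]
      by simp
    then show ?thesis using False c d v w by (simp add: S_I_eq exch_matrix_arrows_BI)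
  qed
  then show ?thesis by (simp only: v_def w_def)
qed

lemma block_form_I:
  assumes "n \<ge> 2"
  shows "block_form n {0..<2 * n} {0, 1} F_I (S_I n evsrc) (B_I n evsrc)"
proof (rule block_form_monomialI[where e = "enum_I n" and k = "\<lambda>_ _. 1"
      and s = "exch_matrix (arrows_BI evsrc) (\<lambda>_. 1)"])
  fix c d :: nat
  have "B_I n evsrc c d =
      of_int (exch_matrix (arrows_BI evsrc) (\<lambda>_. 1) c d) * (2 * cos (pi / real (2 * n + 1)))"
    unfolding B_I_def by (rule exch_matrix_symmetric_weight) simp_all
  then show "B_I n evsrc c d =
      of_int (exch_matrix (arrows_BI evsrc) (\<lambda>_. 1) c d) * chebU 1 (cos (pi / real (2 * n + 1)))"
    by simp
next
  fix c :: nat assume "c \<in> {0, 1}"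
  then show "bij_betw (enum_I n c) {..<n} {v \<in> {0..<2 * n}. F_I v = c}"
    by (rule bij_betw_enum_I)
next
  show "1 < n" using assms by simp
next
  fix c d a b :: nat
  assume "c \<in> {0, 1}" "d \<in> {0, 1}" "a < n" "b < n"
  then show "S_I n evsrc (enum_I n c a) (enum_I n d b) =
      exch_matrix (arrows_BI evsrc) (\<lambda>_. 1) c d * lam_coeff n 1 b a"
    using assms by (intro S_I_enum_I)
qed

lemma mem_edges_H:
  assumes "m \<ge> 2"
  shows "((i, p), (j, q)) \<in> edges_H m \<longleftrightarrow>
    1 \<le> i \<and> j = i + 1 \<and> j \<le> m \<and> (if j = m then p \<or> q else p = q)"
  using assms unfolding edges_H_def by (cases p; cases q) auto

lemma mem_arrows_H:
  assumes "m \<ge> 2"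
  shows "((c, p), (d, q)) \<in> arrows_H m dir \<longleftrightarrow>
    (c, d) \<in> arrows_BH m dir \<and> (if {c, d} = {m - 1, m} then p \<or> q else p = q)"
  using assms unfolding arrows_H_def arrows_BH_def by (auto simp: mem_edges_H doubleton_eq_iff)

lemma S_H_eq:
  assumes "m \<ge> 2"
  shows "S_H m dir (c, p) (d, q) =
    exch_matrix (arrows_BH m dir) (\<lambda>_. 1) c d *
      of_bool (if {c, d} = {m - 1, m} then p \<or> q else p = q)"
  using assms by (auto simp: S_H_def exch_matrix_def mem_arrows_H insert_commute)

definition enum_H :: "nat \<Rightarrow> nat \<Rightarrow> nat \<times> bool" where
  "enum_H i a = (i, a = 1)"

lemma bij_betw_enum_H:
  assumes "i \<in> {1..m}"
  shows "bij_betw (enum_H i) {..<2} {v \<in> V_H m. F_H v = i}"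
  by (rule bij_betw_byWitness[where f' = "\<lambda>v. of_bool (snd v)"])
    (use assms in \<open>auto simp: enum_H_def V_H_def F_H_def\<close>)

lemma block_form_H:
  assumes "m \<ge> 2"
  shows "block_form 2 (V_H m) {1..m} F_H (S_H m dir) (B_H m dir)"
proof (rule block_form_monomialI[where e = enum_H and k = "\<lambda>c d. of_bool ({c, d} = {m - 1, m})"
      and s = "exch_matrix (arrows_BH m dir) (\<lambda>_. 1)"])
  fix c d :: nat
  have "B_H m dir c d = of_int (exch_matrix (arrows_BH m dir) (\<lambda>_. 1) c d) *
      (if {c, d} = {m - 1, m} then 2 * cos (pi / 5) else 1)"
    unfolding B_H_def by (rule exch_matrix_symmetric_weight) (auto simp: insert_commute)
  then show "B_H m dir c d = of_int (exch_matrix (arrows_BH m dir) (\<lambda>_. 1) c d) *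
      chebU (of_bool ({c, d} = {m - 1, m})) (cos (pi / real (2 * 2 + 1)))"
    by simp
next
  fix c d a b :: nat
  assume "a < 2" and "b < 2"
  then show "S_H m dir (enum_H c a) (enum_H d b) =
      exch_matrix (arrows_BH m dir) (\<lambda>_. 1) c d *
        lam_coeff 2 (of_bool ({c, d} = {m - 1, m})) b a"
    using assms by (auto simp: enum_H_def S_H_eq lam_coeff_dim2)
qed (simp_all add: bij_betw_enum_H)

theorem proposition4p9:
  shows "(\<forall>n::nat. \<forall>evsrc::bool. n \<ge> 2 \<longrightarrow>
            block_form n {0..<2 * n} {0, 1} F_I (S_I n evsrc) (B_I n evsrc)) \<and>
         (\<forall>m::nat. \<forall>dir::nat \<Rightarrow> bool. m \<in> {3, 4} \<longrightarrow>
            block_form 2 (V_H m) {1..m} F_H (S_H m dir) (B_H m dir))"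
  using block_form_I block_form_H by auto

end
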